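(* Let $G$ be a connected plane graph on $n$ vertices whose infinite face is bounded by a simple triangle, and let $\mathcal{K}$ be its component tree with the cost function defined below. Then there is a constant $c$ (independent of $G$) such that for every integer $w\ge 1$ there exists an integer $\delta\in[0,w)$ such that the total cost of all nodes of $\mathcal{K}$ at depths $\delta,\delta+w,\delta+2w,\ldots$ is at most $c\,n/w$.
   Context: The face-vertex incidence graph $FV(G)$ has a node for every vertex and every face of $G$, with an edge between a vertex $v$ and a face $f$ whenever $v$ is incident to $f$. Run a breadth-first search in $FV(G)$ from the node of the infinite face; the level of a face or vertex is its depth in this BFS tree (so the infinite face has level 0). For each even integer $i\ge 2$, a level-$i$ component is a connected component of the subgraph of $G$ induced by the faces of level at least $i$. The component tree $\mathcal{K}$ has the level components as nodes, where a level component $K$ is an ancestor of $K'$ if the set of faces of $K$ contains the set of faces of $K'$; its root is the component consisting of all faces of $G$ except the infinite face. The boundary of a component $K$ is the set of edges incident both to a face in $K$ and to a face not in $K$; it is a simple cycle $C_K$, and boundaries of distinct components are edge-disjoint. The cost of a node $K$ is the length (number of edges) of $C_K$. *)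

theory Defs
  imports Complex_Main
begin

text \<open>A connected plane graph is encoded combinatorially as a connected planar
combinatorial map on a finite set D of darts (half-edges, labelled by naturals):
alpha is a fixed-point-free involution (the two halves of an edge),
sigma is the rotation of darts around their tail vertex.\<close>

definition orb :: "(nat \<Rightarrow> nat) \<Rightarrow> nat \<Rightarrow> nat set" where
  "orb f x = {(f ^^ k) x | k. True}"

definition cm_verts :: "nat set \<Rightarrow> (nat \<Rightarrow> nat) \<Rightarrow> nat set set" where
  "cm_verts D \<sigma> = {orb \<sigma> d | d. d \<in> D}"

definition cm_edges :: "nat set \<Rightarrow> (nat \<Rightarrow> nat) \<Rightarrow> nat set set" where
  "cm_edges D \<alpha> = {orb \<alpha> d | d. d \<in> D}"

definition cm_faces :: "nat set \<Rightarrow> (nat \<Rightarrow> nat) \<Rightarrow> (nat \<Rightarrow> nat) \<Rightarrow> nat set set" where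
  "cm_faces D \<alpha> \<sigma> = {orb (\<sigma> \<circ> \<alpha>) d | d. d \<in> D}"

definition comb_map :: "nat set \<Rightarrow> (nat \<Rightarrow> nat) \<Rightarrow> (nat \<Rightarrow> nat) \<Rightarrow> bool" where
  "comb_map D \<alpha> \<sigma> \<longleftrightarrow> finite D \<and> bij_betw \<alpha> D D \<and> bij_betw \<sigma> D D
     \<and> (\<forall>d\<in>D. \<alpha> d \<noteq> d \<and> \<alpha> (\<alpha> d) = d)"

definition cm_connected :: "nat set \<Rightarrow> (nat \<Rightarrow> nat) \<Rightarrow> (nat \<Rightarrow> nat) \<Rightarrow> bool" where
  "cm_connected D \<alpha> \<sigma> \<longleftrightarrow>
     (\<forall>d\<in>D. \<forall>d'\<in>D. (d, d') \<in> ({(x, \<alpha> x) | x. x \<in> D} \<union> {(x, \<sigma> x) | x. x \<in> D})\<^sup>*)"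

definition cm_planar :: "nat set \<Rightarrow> (nat \<Rightarrow> nat) \<Rightarrow> (nat \<Rightarrow> nat) \<Rightarrow> bool" where
  "cm_planar D \<alpha> \<sigma> \<longleftrightarrow>
     int (card (cm_verts D \<sigma>)) - int (card (cm_edges D \<alpha>)) + int (card (cm_faces D \<alpha> \<sigma>)) = 2"

definition cm_simple :: "nat set \<Rightarrow> (nat \<Rightarrow> nat) \<Rightarrow> (nat \<Rightarrow> nat) \<Rightarrow> bool" where
  "cm_simple D \<alpha> \<sigma> \<longleftrightarrow>
     (\<forall>d\<in>D. orb \<sigma> d \<noteq> orb \<sigma> (\<alpha> d)) \<and>
     (\<forall>d\<in>D. \<forall>d'\<in>D. orb \<sigma> d = orb \<sigma> d' \<and> orb \<sigma> (\<alpha> d) = orb \<sigma> (\<alpha> d') \<longrightarrow> d = d')"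

text \<open>A connected simple plane graph with designated infinite face f0 bounded by a simple
triangle (face of length 3 whose three corners are distinct vertices).\<close>
definition plane_graph_tri :: "nat set \<Rightarrow> (nat \<Rightarrow> nat) \<Rightarrow> (nat \<Rightarrow> nat) \<Rightarrow> nat set \<Rightarrow> bool" where
  "plane_graph_tri D \<alpha> \<sigma> f0 \<longleftrightarrow>
     comb_map D \<alpha> \<sigma> \<and> cm_connected D \<alpha> \<sigma> \<and> cm_planar D \<alpha> \<sigma> \<and> cm_simple D \<alpha> \<sigma> \<and>
     f0 \<in> cm_faces D \<alpha> \<sigma> \<and> card f0 = 3 \<and> card (orb \<sigma> ` f0) = 3"

text \<open>Face-vertex incidence graph FV(G); nodes Inl v (vertex), Inr f (face).\<close>
definition fv_rel :: "nat set \<Rightarrow> (nat \<Rightarrow> nat) \<Rightarrow> (nat \<Rightarrow> nat) \<Rightarrow> (nat set + nat set) rel" where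
  "fv_rel D \<alpha> \<sigma> =
     (let R = {(Inl v, Inr f) | v f. v \<in> cm_verts D \<sigma> \<and> f \<in> cm_faces D \<alpha> \<sigma> \<and> v \<inter> f \<noteq> {}}
      in R \<union> R\<inverse>)"

definition fv_level :: "nat set \<Rightarrow> (nat \<Rightarrow> nat) \<Rightarrow> (nat \<Rightarrow> nat) \<Rightarrow> nat set \<Rightarrow> nat set + nat set \<Rightarrow> nat" where
  "fv_level D \<alpha> \<sigma> f0 x = (LEAST k. (Inr f0, x) \<in> fv_rel D \<alpha> \<sigma> ^^ k)"

definition faces_ge :: "nat set \<Rightarrow> (nat \<Rightarrow> nat) \<Rightarrow> (nat \<Rightarrow> nat) \<Rightarrow> nat set \<Rightarrow> nat \<Rightarrow> nat set set" where
  "faces_ge D \<alpha> \<sigma> f0 i = {f \<in> cm_faces D \<alpha> \<sigma>. fv_level D \<alpha> \<sigma> f0 (Inr f) \<ge> i}"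

text \<open>Two faces of level >= i lie in the same component of the subgraph induced by these
faces iff they are linked by a chain of such faces, consecutive ones sharing a vertex.\<close>
definition share_rel :: "nat set \<Rightarrow> (nat \<Rightarrow> nat) \<Rightarrow> (nat \<Rightarrow> nat) \<Rightarrow> nat set \<Rightarrow> nat \<Rightarrow> nat set rel" where
  "share_rel D \<alpha> \<sigma> f0 i = {(f, g). f \<in> faces_ge D \<alpha> \<sigma> f0 i \<and> g \<in> faces_ge D \<alpha> \<sigma> f0 i \<and>
       (\<exists>v \<in> cm_verts D \<sigma>. v \<inter> f \<noteq> {} \<and> v \<inter> g \<noteq> {})}"

definition level_comp :: "nat set \<Rightarrow> (nat \<Rightarrow> nat) \<Rightarrow> (nat \<Rightarrow> nat) \<Rightarrow> nat set \<Rightarrow> nat \<Rightarrow> nat set \<Rightarrow> nat set set" where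
  "level_comp D \<alpha> \<sigma> f0 i f = {g \<in> faces_ge D \<alpha> \<sigma> f0 i. (f, g) \<in> (share_rel D \<alpha> \<sigma> f0 i)\<^sup>*}"

text \<open>Nodes of the component tree (identified by their face sets).\<close>
definition comp_tree_nodes :: "nat set \<Rightarrow> (nat \<Rightarrow> nat) \<Rightarrow> (nat \<Rightarrow> nat) \<Rightarrow> nat set \<Rightarrow> nat set set set" where
  "comp_tree_nodes D \<alpha> \<sigma> f0 =
     {level_comp D \<alpha> \<sigma> f0 i f | i f. even i \<and> i \<ge> 2 \<and> f \<in> faces_ge D \<alpha> \<sigma> f0 i}"

text \<open>Depth of a node = number of proper ancestors (components with strictly larger face set).\<close>
definition node_depth :: "nat set \<Rightarrow> (nat \<Rightarrow> nat) \<Rightarrow> (nat \<Rightarrow> nat) \<Rightarrow> nat set \<Rightarrow> nat set set \<Rightarrow> nat" where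
  "node_depth D \<alpha> \<sigma> f0 K = card {K' \<in> comp_tree_nodes D \<alpha> \<sigma> f0. K \<subset> K'}"

definition node_cost :: "nat set \<Rightarrow> (nat \<Rightarrow> nat) \<Rightarrow> (nat \<Rightarrow> nat) \<Rightarrow> nat set set \<Rightarrow> nat" where
  "node_cost D \<alpha> \<sigma> K = card {e \<in> cm_edges D \<alpha>.
      (\<exists>f \<in> K. e \<inter> f \<noteq> {}) \<and> (\<exists>g \<in> cm_faces D \<alpha> \<sigma> - K. e \<inter> g \<noteq> {})}"

end

theory Submission
  imports Defs "HOL-Combinatorics.Orbits"
begin

text \<open>Every edge lies on the boundary of at most eight nodes of the component tree: its two
incident faces f and g share a vertex, so their levels differ by at most two, and a level-i
component containing f but not g has level(g) < i \<le> level(g) + 2 and is the level-i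
component of f. In a simple plane graph bounded by a triangle every face has length at least 3,
so Euler's formula gives at most 3n edges and the total cost of all nodes is at most 24n. One of
the w residue classes of depths modulo w carries at most a 1/w share of this total.\<close>

lemma funpow_in_bij_betw:
  assumes "bij_betw f D D" "x \<in> D"
  shows "(f ^^ k) x \<in> D"
  by (induction k) (use assms in \<open>auto simp: bij_betw_apply\<close>)

lemma orb_subset:
  assumes "bij_betw f D D" "x \<in> D"
  shows "orb f x \<subseteq> D"
  using funpow_in_bij_betw[OF assms] unfolding orb_def by blast

lemma self_in_orb: "x \<in> orb f x"
  unfolding orb_def by (auto intro: exI[of _ 0])

lemma apply_in_orb: "f x \<in> orb f x"
  unfolding orb_def by (auto intro: exI[of _ 1])

lemma funpow_perm_restrict:
  assumes "bij_betw f D D" "x \<in> D"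
  shows "(perm_restrict f D ^^ k) x = (f ^^ k) x"
  by (induction k) (simp_all add: perm_restrict_simps funpow_in_bij_betw[OF assms])

lemma perm_restrict_permutes:
  assumes "bij_betw f D D"
  shows "perm_restrict f D permutes D"
  by (rule bij_imp_permutes)
     (use assms in \<open>auto simp: perm_restrict_simps cong: bij_betw_cong\<close>)

lemma orb_eq_orbit_perm_restrict:
  assumes "finite D" "bij_betw f D D" "x \<in> D"
  shows "orb f x = orbit (perm_restrict f D) x"
proof -
  have "permutation (perm_restrict f D)"
    using assms(1) perm_restrict_permutes[OF assms(2)] permutation_permutes by blast
  then show ?thesis
    by (simp add: orbit_altdef_permutation orb_def funpow_perm_restrict[OF assms(2,3)])
qed

lemma orb_eqI:
  assumes "finite D" "bij_betw f D D" "x \<in> D" "y \<in> orb f x"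
  shows "orb f y = orb f x"
proof -
  let ?g = "perm_restrict f D"
  have "y \<in> D" using orb_subset[OF assms(2,3)] assms(4) by blast
  have "cyclic_on ?g (orbit ?g x)"
    using perm_restrict_permutes[OF assms(2)] assms(1) by (rule cyclic_on_orbit)
  then show ?thesis
    using assms orbit_cyclic_eq3 orb_eq_orbit_perm_restrict[OF assms(1,2)] \<open>y \<in> D\<close> by metis
qed

lemma orb_apply_eq:
  assumes "finite D" "bij_betw f D D" "x \<in> D"
  shows "orb f (f x) = orb f x"
  using assms apply_in_orb by (rule orb_eqI)

lemma card_eq_sum_card_orbs:
  assumes "finite D" "bij_betw f D D"
  shows "card D = (\<Sum>X \<in> {orb f d | d. d \<in> D}. card X)"
proof -
  let ?O = "{orb f d | d. d \<in> D}"
  have "\<Union>?O = D"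
    using orb_subset[OF assms(2)] self_in_orb by blast
  moreover have "pairwise disjnt ?O"
  proof (rule pairwiseI, clarify)
    fix x y assume "x \<in> D" "y \<in> D" "orb f x \<noteq> orb f y"
    then show "disjnt (orb f x) (orb f y)"
      unfolding disjnt_def using orb_eqI[OF assms] by blast
  qed
  moreover have "\<forall>X \<in> ?O. finite X"
    using finite_subset[OF orb_subset[OF assms(2)] assms(1)] by blast
  ultimately show ?thesis
    using card_Union_disjoint[of ?O] by simp
qed

lemma comb_map_face_perm:
  "comb_map D \<alpha> \<sigma> \<Longrightarrow> bij_betw (\<sigma> \<circ> \<alpha>) D D"
  unfolding comb_map_def using bij_betw_trans by blast

lemma comb_map_edge_eq:
  assumes "comb_map D \<alpha> \<sigma>" "d \<in> D"
  shows "orb \<alpha> d = {d, \<alpha> d}"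
proof -
  have "\<alpha> (\<alpha> d) = d" using assms unfolding comb_map_def by blast
  then have "(\<alpha> ^^ k) d \<in> {d, \<alpha> d}" for k
    by (induction k) auto
  then show ?thesis unfolding orb_def by (auto intro: exI[of _ 0] exI[of _ 1])
qed

lemma card_darts_eq_twice_card_edges:
  assumes "comb_map D \<alpha> \<sigma>"
  shows "card D = 2 * card (cm_edges D \<alpha>)"
proof -
  have "card D = (\<Sum>X \<in> cm_edges D \<alpha>. card X)"
    using assms card_eq_sum_card_orbs unfolding comb_map_def cm_edges_def by blast
  also have "\<dots> = (\<Sum>X \<in> cm_edges D \<alpha>. 2)"
  proof (rule sum.cong)
    fix X assume "X \<in> cm_edges D \<alpha>"
    then obtain d where "d \<in> D" "X = orb \<alpha> d" unfolding cm_edges_def by blast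
    moreover have "\<alpha> d \<noteq> d" using assms \<open>d \<in> D\<close> unfolding comb_map_def by blast
    ultimately show "card X = 2" using comb_map_edge_eq[OF assms] by simp
  qed simp
  finally show ?thesis by simp
qed

lemma simple_face_perm_no_fixpoint:
  assumes "comb_map D \<alpha> \<sigma>" "cm_simple D \<alpha> \<sigma>" "d \<in> D"
  shows "\<sigma> (\<alpha> d) \<noteq> d"
proof
  assume "\<sigma> (\<alpha> d) = d"
  moreover have "\<alpha> d \<in> D" using assms(1,3) unfolding comb_map_def by (blast dest: bij_betw_apply)
  ultimately have "orb \<sigma> d = orb \<sigma> (\<alpha> d)"
    using assms(1) orb_apply_eq unfolding comb_map_def by metis
  then show False using assms(2,3) unfolding cm_simple_def by blast
qed

lemma simple_face_perm_2cycle_fixes_edge: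
  assumes cm: "comb_map D \<alpha> \<sigma>" and simple: "cm_simple D \<alpha> \<sigma>" and "d \<in> D"
    and digon: "\<sigma> (\<alpha> (\<sigma> (\<alpha> d))) = d"
  shows "\<sigma> d = d \<and> \<sigma> (\<alpha> d) = \<alpha> d"
proof -
  define d' where "d' = \<sigma> (\<alpha> d)"
  have fin: "finite D" and \<alpha>: "bij_betw \<alpha> D D" and \<sigma>: "bij_betw \<sigma> D D"
    and inv: "\<forall>x\<in>D. \<alpha> (\<alpha> x) = x"
    using cm unfolding comb_map_def by blast+
  have "\<alpha> d \<in> D" "d' \<in> D" "\<alpha> d' \<in> D"
    using \<open>d \<in> D\<close> \<alpha> \<sigma> unfolding d'_def by (blast dest: bij_betw_apply)+
  have "orb \<sigma> d = orb \<sigma> (\<alpha> d')"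
    using orb_apply_eq[OF fin \<sigma> \<open>\<alpha> d' \<in> D\<close>] digon unfolding d'_def by simp
  moreover have "orb \<sigma> (\<alpha> d) = orb \<sigma> (\<alpha> (\<alpha> d'))"
    using orb_apply_eq[OF fin \<sigma> \<open>\<alpha> d \<in> D\<close>] inv \<open>d' \<in> D\<close> unfolding d'_def by simp
  \<comment> \<open>The edges of d and of \<alpha> d' join the same two vertices, so they coincide.\<close>
  ultimately have "d = \<alpha> d'"
    using simple \<open>d \<in> D\<close> \<open>\<alpha> d' \<in> D\<close> unfolding cm_simple_def by blast
  then show ?thesis
    using digon inv \<open>d' \<in> D\<close> unfolding d'_def by metis
qed

lemma connected_closed_subset:
  assumes "cm_connected D \<alpha> \<sigma>" "d \<in> D" "d \<in> S"
    and closed: "\<And>x. x \<in> S \<Longrightarrow> \<alpha> x \<in> S \<and> \<sigma> x \<in> S"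
  shows "D \<subseteq> S"
proof
  fix y assume "y \<in> D"
  then have "(d, y) \<in> ({(x, \<alpha> x) | x. x \<in> D} \<union> {(x, \<sigma> x) | x. x \<in> D})\<^sup>*"
    using assms(1,2) unfolding cm_connected_def by blast
  then show "y \<in> S"
    by (induction rule: rtrancl_induct) (use assms(3) closed in auto)
qed

lemma plane_graph_tri_face_card_ge_3:
  assumes pg: "plane_graph_tri D \<alpha> \<sigma> f0" and d: "d \<in> D"
  shows "3 \<le> card (orb (\<sigma> \<circ> \<alpha>) d)"
proof (rule ccontr)
  let ?p = "\<sigma> \<circ> \<alpha>"
  assume short: "\<not> 3 \<le> card (orb ?p d)"
  have cm: "comb_map D \<alpha> \<sigma>" and simple: "cm_simple D \<alpha> \<sigma>"
    and conn: "cm_connected D \<alpha> \<sigma>" and f0: "f0 \<in> cm_faces D \<alpha> \<sigma>" "card f0 = 3"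
    using pg unfolding plane_graph_tri_def by blast+
  have fin: "finite D" and inv: "\<forall>x\<in>D. \<alpha> (\<alpha> x) = x"
    using cm unfolding comb_map_def by blast+
  have p: "bij_betw ?p D D" using cm by (rule comb_map_face_perm)
  have "?p (?p d) \<in> orb ?p d"
    using apply_in_orb[of ?p "?p d"] orb_apply_eq[OF fin p d] by simp
  then have "{d, ?p d, ?p (?p d)} \<subseteq> orb ?p d"
    using self_in_orb apply_in_orb by blast
  then have "card {d, ?p d, ?p (?p d)} \<le> card (orb ?p d)"
    using finite_subset[OF orb_subset[OF p d] fin] by (rule card_mono[rotated])
  then have "card {d, ?p d, ?p (?p d)} < 3"
    using short by linarith
  moreover have "?p d \<noteq> d"
    using simple_face_perm_no_fixpoint[OF cm simple d] by simp
  moreover have "?p (?p d) \<noteq> ?p d"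
    using \<open>?p d \<noteq> d\<close> bij_betw_imp_inj_on[OF p] bij_betw_apply[OF p d] d
    by (metis inj_onD)
  ultimately have "?p (?p d) = d"
    by (auto simp: card_insert_if split: if_splits)
  then have fix_edge: "\<sigma> d = d \<and> \<sigma> (\<alpha> d) = \<alpha> d"
    using simple_face_perm_2cycle_fixes_edge[OF cm simple d] by simp
  \<comment> \<open>So the graph is a single edge, too small to contain the triangle f0.\<close>
  have "D \<subseteq> {d, \<alpha> d}"
    by (rule connected_closed_subset[OF conn d]) (use fix_edge inv d in auto)
  moreover have "f0 \<subseteq> D"
    using f0(1) orb_subset[OF p] unfolding cm_faces_def by blast
  ultimately have "card f0 \<le> card {d, \<alpha> d}"
    by (intro card_mono) auto
  then show False
    using f0(2) by (simp add: card_insert_if split: if_splits)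
qed

lemma plane_graph_tri_card_edges_le:
  assumes pg: "plane_graph_tri D \<alpha> \<sigma> f0"
  shows "card (cm_edges D \<alpha>) \<le> 3 * card (cm_verts D \<sigma>)"
proof -
  have cm: "comb_map D \<alpha> \<sigma>" and euler:
    "int (card (cm_verts D \<sigma>)) - int (card (cm_edges D \<alpha>)) + int (card (cm_faces D \<alpha> \<sigma>)) = 2"
    using pg unfolding plane_graph_tri_def cm_planar_def by blast+
  have "3 * card (cm_faces D \<alpha> \<sigma>) = (\<Sum>X \<in> cm_faces D \<alpha> \<sigma>. 3)"
    by simp
  also have "\<dots> \<le> (\<Sum>X \<in> cm_faces D \<alpha> \<sigma>. card X)"
    using plane_graph_tri_face_card_ge_3[OF pg] unfolding cm_faces_def
    by (intro sum_mono) blast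
  also have "\<dots> = card D"
    using card_eq_sum_card_orbs[OF _ comb_map_face_perm[OF cm]] cm
    unfolding cm_faces_def comb_map_def by simp
  also have "\<dots> = 2 * card (cm_edges D \<alpha>)"
    using cm by (rule card_darts_eq_twice_card_edges)
  finally show ?thesis using euler by linarith
qed

lemma fv_rel_relpow_through_vertex:
  assumes "(x, Inr g) \<in> fv_rel D \<alpha> \<sigma> ^^ k" "v \<in> cm_verts D \<sigma>"
    "g \<in> cm_faces D \<alpha> \<sigma>" "f \<in> cm_faces D \<alpha> \<sigma>" "v \<inter> g \<noteq> {}" "v \<inter> f \<noteq> {}"
  shows "(x, Inr f) \<in> fv_rel D \<alpha> \<sigma> ^^ Suc (Suc k)"
proof -
  have "(Inr g, Inl v) \<in> fv_rel D \<alpha> \<sigma>" "(Inl v, Inr f) \<in> fv_rel D \<alpha> \<sigma>"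
    using assms(2-6) unfolding fv_rel_def Let_def by blast+
  then show ?thesis
    using relpow_Suc_I[OF relpow_Suc_I[OF assms(1)]] by blast
qed

lemma fv_level_faces_sharing_vertex:
  assumes v: "v \<in> cm_verts D \<sigma>" "v \<inter> g \<noteq> {}" "v \<inter> f \<noteq> {}"
    and faces: "g \<in> cm_faces D \<alpha> \<sigma>" "f \<in> cm_faces D \<alpha> \<sigma>"
  shows "fv_level D \<alpha> \<sigma> f0 (Inr f) \<le> fv_level D \<alpha> \<sigma> f0 (Inr g) + 2"
proof (cases "\<exists>k. (Inr f0, Inr g) \<in> fv_rel D \<alpha> \<sigma> ^^ k")
  case True
  let ?k = "LEAST k. (Inr f0, Inr g) \<in> fv_rel D \<alpha> \<sigma> ^^ k"
  have "(Inr f0, Inr g) \<in> fv_rel D \<alpha> \<sigma> ^^ ?k"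
    using True by (rule LeastI_ex)
  then have "(Inr f0, Inr f) \<in> fv_rel D \<alpha> \<sigma> ^^ Suc (Suc ?k)"
    by (rule fv_rel_relpow_through_vertex[OF _ v(1) faces v(2,3)])
  then have "(LEAST k. (Inr f0, Inr f) \<in> fv_rel D \<alpha> \<sigma> ^^ k) \<le> Suc (Suc ?k)"
    by (rule Least_le)
  then show ?thesis
    unfolding fv_level_def by simp
next
  case False
  \<comment> \<open>Both faces are unreachable, so both levels are the same junk value LEAST k. False.\<close>
  have "\<nexists>k. (Inr f0, Inr f) \<in> fv_rel D \<alpha> \<sigma> ^^ k"
  proof
    assume "\<exists>k. (Inr f0, Inr f) \<in> fv_rel D \<alpha> \<sigma> ^^ k"
    then obtain k where "(Inr f0, Inr f) \<in> fv_rel D \<alpha> \<sigma> ^^ k" ..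
    then have "(Inr f0, Inr g) \<in> fv_rel D \<alpha> \<sigma> ^^ Suc (Suc k)"
      by (rule fv_rel_relpow_through_vertex[OF _ v(1) faces(2,1) v(3,2)])
    with False show False by blast
  qed
  then show ?thesis
    using False unfolding fv_level_def by simp
qed

lemma level_comp_eq:
  assumes "(h, f) \<in> (share_rel D \<alpha> \<sigma> f0 i)\<^sup>*"
  shows "level_comp D \<alpha> \<sigma> f0 i h = level_comp D \<alpha> \<sigma> f0 i f"
proof -
  have "sym ((share_rel D \<alpha> \<sigma> f0 i)\<^sup>*)"
    by (rule sym_rtrancl) (auto simp: sym_def share_rel_def)
  then have "(f, h) \<in> (share_rel D \<alpha> \<sigma> f0 i)\<^sup>*"
    using assms by (rule symD)
  then show ?thesis
    unfolding level_comp_def using assms by (blast intro: rtrancl_trans)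
qed

lemma comp_tree_node_separating_faces:
  assumes K: "K \<in> comp_tree_nodes D \<alpha> \<sigma> f0" "f \<in> K"
    and g: "g \<in> cm_faces D \<alpha> \<sigma>" "g \<notin> K"
    and v: "v \<in> cm_verts D \<sigma>" "v \<inter> f \<noteq> {}" "v \<inter> g \<noteq> {}"
  obtains j where "j \<in> {1, 2}" "K = level_comp D \<alpha> \<sigma> f0 (fv_level D \<alpha> \<sigma> f0 (Inr g) + j) f"
proof -
  let ?lev = "fv_level D \<alpha> \<sigma> f0"
  let ?S = "share_rel D \<alpha> \<sigma> f0"
  obtain i h where Kih: "K = level_comp D \<alpha> \<sigma> f0 i h"
    using K(1) unfolding comp_tree_nodes_def by blast
  have f_ge: "f \<in> faces_ge D \<alpha> \<sigma> f0 i" and hf: "(h, f) \<in> (?S i)\<^sup>*"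
    using K(2) unfolding Kih level_comp_def by auto
  have "?lev (Inr g) < i"
  proof (rule ccontr)
    assume "\<not> ?lev (Inr g) < i"
    then have g_ge: "g \<in> faces_ge D \<alpha> \<sigma> f0 i"
      using g(1) unfolding faces_ge_def by simp
    then have "(f, g) \<in> ?S i"
      using f_ge v unfolding share_rel_def by blast
    then have "g \<in> K"
      using hf g_ge unfolding Kih level_comp_def by (blast intro: rtrancl_into_rtrancl)
    then show False using g(2) by simp
  qed
  moreover have "i \<le> ?lev (Inr f)"
    using f_ge unfolding faces_ge_def by simp
  moreover have "?lev (Inr f) \<le> ?lev (Inr g) + 2"
    using f_ge g(1) v unfolding faces_ge_def by (intro fv_level_faces_sharing_vertex) auto
  ultimately have j: "i - ?lev (Inr g) \<in> {1, 2}" and i: "i = ?lev (Inr g) + (i - ?lev (Inr g))"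
    by auto
  have "K = level_comp D \<alpha> \<sigma> f0 i f"
    unfolding Kih using hf by (rule level_comp_eq)
  then have "K = level_comp D \<alpha> \<sigma> f0 (?lev (Inr g) + (i - ?lev (Inr g))) f"
    by (simp only: i[symmetric])
  with j show ?thesis by (rule that)
qed

lemma comb_map_faces_meeting_edge:
  assumes cm: "comb_map D \<alpha> \<sigma>" and d: "d \<in> D"
    and g: "g \<in> cm_faces D \<alpha> \<sigma>" "{d, \<alpha> d} \<inter> g \<noteq> {}"
  shows "g = orb (\<sigma> \<circ> \<alpha>) d \<or> g = orb (\<sigma> \<circ> \<alpha>) (\<alpha> d)"
proof -
  have fin: "finite D" using cm unfolding comb_map_def by blast
  obtain x where x: "x \<in> D" "g = orb (\<sigma> \<circ> \<alpha>) x"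
    using g(1) unfolding cm_faces_def by blast
  obtain z where z: "z \<in> {d, \<alpha> d}" "z \<in> g"
    using g(2) by blast
  have "orb (\<sigma> \<circ> \<alpha>) z = g"
    using orb_eqI[OF fin comb_map_face_perm[OF cm] x(1)] z(2) x(2) by simp
  then show ?thesis using z(1) by blast
qed

lemma comb_map_vertex_meets_edge_faces:
  assumes "comb_map D \<alpha> \<sigma>" "d \<in> D"
  shows "orb \<sigma> d \<inter> orb (\<sigma> \<circ> \<alpha>) d \<noteq> {}" "orb \<sigma> d \<inter> orb (\<sigma> \<circ> \<alpha>) (\<alpha> d) \<noteq> {}"
proof -
  have "d \<in> orb \<sigma> d" "d \<in> orb (\<sigma> \<circ> \<alpha>) d"
    by (rule self_in_orb)+
  then show "orb \<sigma> d \<inter> orb (\<sigma> \<circ> \<alpha>) d \<noteq> {}"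
    by blast
  have "\<alpha> (\<alpha> d) = d"
    using assms unfolding comb_map_def by blast
  then have "\<sigma> d \<in> orb (\<sigma> \<circ> \<alpha>) (\<alpha> d)"
    using apply_in_orb[of "\<sigma> \<circ> \<alpha>" "\<alpha> d"] by simp
  moreover have "\<sigma> d \<in> orb \<sigma> d"
    by (rule apply_in_orb)
  ultimately show "orb \<sigma> d \<inter> orb (\<sigma> \<circ> \<alpha>) (\<alpha> d) \<noteq> {}"
    by blast
qed

lemma comp_tree_nodes_subset_faces:
  "K \<in> comp_tree_nodes D \<alpha> \<sigma> f0 \<Longrightarrow> K \<subseteq> cm_faces D \<alpha> \<sigma>"
  unfolding comp_tree_nodes_def level_comp_def faces_ge_def by blast

lemma finite_comp_tree_nodes:
  assumes "comb_map D \<alpha> \<sigma>"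
  shows "finite (comp_tree_nodes D \<alpha> \<sigma> f0)"
proof -
  have "finite (cm_faces D \<alpha> \<sigma>)"
    using assms unfolding comb_map_def cm_faces_def by simp
  moreover have "comp_tree_nodes D \<alpha> \<sigma> f0 \<subseteq> Pow (cm_faces D \<alpha> \<sigma>)"
    using comp_tree_nodes_subset_faces by blast
  ultimately show ?thesis
    using finite_subset by blast
qed

lemma comb_map_card_boundary_nodes_le:
  assumes cm: "comb_map D \<alpha> \<sigma>" and e: "e \<in> cm_edges D \<alpha>"
  shows "card {K \<in> comp_tree_nodes D \<alpha> \<sigma> f0.
            (\<exists>f \<in> K. e \<inter> f \<noteq> {}) \<and> (\<exists>g \<in> cm_faces D \<alpha> \<sigma> - K. e \<inter> g \<noteq> {})} \<le> 8"
proof -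
  obtain d where d: "d \<in> D" and ed: "e = {d, \<alpha> d}"
    using e comb_map_edge_eq[OF cm] unfolding cm_edges_def by blast
  define F where "F = {orb (\<sigma> \<circ> \<alpha>) d, orb (\<sigma> \<circ> \<alpha>) (\<alpha> d)}"
  define v where "v = orb \<sigma> d"
  have v: "v \<in> cm_verts D \<sigma>"
    unfolding v_def cm_verts_def using d by blast
  have F: "g \<in> F" if "g \<in> cm_faces D \<alpha> \<sigma>" "e \<inter> g \<noteq> {}" for g
    using comb_map_faces_meeting_edge[OF cm d that(1)] that(2) unfolding ed F_def by blast
  have vF: "v \<inter> g \<noteq> {}" if "g \<in> F" for g
    using comb_map_vertex_meets_edge_faces[OF cm d] that unfolding v_def F_def by blast
  let ?comp = "\<lambda>(f, g, j). level_comp D \<alpha> \<sigma> f0 (fv_level D \<alpha> \<sigma> f0 (Inr g) + j) f"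
  have "{K \<in> comp_tree_nodes D \<alpha> \<sigma> f0.
            (\<exists>f \<in> K. e \<inter> f \<noteq> {}) \<and> (\<exists>g \<in> cm_faces D \<alpha> \<sigma> - K. e \<inter> g \<noteq> {})}
        \<subseteq> ?comp ` (F \<times> F \<times> {1, 2})"
  proof clarify
    fix K f g
    assume K: "K \<in> comp_tree_nodes D \<alpha> \<sigma> f0" and f: "f \<in> K" "e \<inter> f \<noteq> {}"
      and g: "g \<in> cm_faces D \<alpha> \<sigma>" "g \<notin> K" "e \<inter> g \<noteq> {}"
    have "f \<in> F" "g \<in> F"
      using F comp_tree_nodes_subset_faces[OF K] f g by blast+
    moreover obtain j where "j \<in> {1, 2}"
      "K = level_comp D \<alpha> \<sigma> f0 (fv_level D \<alpha> \<sigma> f0 (Inr g) + j) f"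
      using comp_tree_node_separating_faces[OF K f(1) g(1,2) v]
        vF[OF \<open>f \<in> F\<close>] vF[OF \<open>g \<in> F\<close>] by blast
    ultimately show "K \<in> ?comp ` (F \<times> F \<times> {1, 2})"
      by (intro rev_image_eqI[of "(f, g, j)"]) auto
  qed
  then have "card {K \<in> comp_tree_nodes D \<alpha> \<sigma> f0.
            (\<exists>f \<in> K. e \<inter> f \<noteq> {}) \<and> (\<exists>g \<in> cm_faces D \<alpha> \<sigma> - K. e \<inter> g \<noteq> {})}
        \<le> card (F \<times> F \<times> {1::nat, 2})"
    by (rule surj_card_le[rotated]) (simp add: F_def)
  also have "\<dots> \<le> 8"
    unfolding F_def by (simp add: card_cartesian_product card_insert_if)
  finally show ?thesis .
qed

lemma comb_map_sum_node_cost_le: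
  assumes cm: "comb_map D \<alpha> \<sigma>"
  shows "(\<Sum>K \<in> comp_tree_nodes D \<alpha> \<sigma> f0. node_cost D \<alpha> \<sigma> K) \<le> 8 * card (cm_edges D \<alpha>)"
proof -
  let ?N = "comp_tree_nodes D \<alpha> \<sigma> f0"
  let ?bd = "\<lambda>K e. (\<exists>f \<in> K. e \<inter> f \<noteq> {}) \<and> (\<exists>g \<in> cm_faces D \<alpha> \<sigma> - K. e \<inter> g \<noteq> {})"
  have fin: "finite ?N" "finite (cm_edges D \<alpha>)"
    using finite_comp_tree_nodes[OF cm] cm unfolding comb_map_def cm_edges_def by simp_all
  have "(\<Sum>K \<in> ?N. node_cost D \<alpha> \<sigma> K) = (\<Sum>e \<in> cm_edges D \<alpha>. card {K \<in> ?N. ?bd K e})"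
    unfolding node_cost_def by (rule sum_multicount_gen[OF fin]) simp
  also have "\<dots> \<le> (\<Sum>e \<in> cm_edges D \<alpha>. 8)"
    by (rule sum_mono) (rule comb_map_card_boundary_nodes_le[OF cm])
  finally show ?thesis by simp
qed

lemma ex_residue_class_sum_le_average:
  fixes h :: "'a \<Rightarrow> real" and g :: "'a \<Rightarrow> nat"
  assumes "finite N" "0 < w"
  shows "\<exists>\<delta><w. (\<Sum>K \<in> {K \<in> N. g K mod w = \<delta>}. h K) \<le> (\<Sum>K \<in> N. h K) / real w"
proof (rule ccontr)
  assume "\<not> ?thesis"
  then have "(\<Sum>\<delta><w. (\<Sum>K \<in> N. h K) / real w) < (\<Sum>\<delta><w. \<Sum>K \<in> {K \<in> N. g K mod w = \<delta>}. h K)"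
    using assms(2) by (intro sum_strict_mono) auto
  also have "\<dots> = (\<Sum>K \<in> N. h K)"
  proof -
    have "(\<lambda>K. g K mod w) ` N \<subseteq> {..<w}"
      using assms(2) by auto
    then show ?thesis
      using sum.group[OF assms(1) finite_lessThan, where h = h] by simp
  qed
  finally show False
    using assms(2) by simp
qed

theorem lemma5:
  shows "\<exists>c::real. \<forall>D \<alpha> \<sigma> f0 (w::nat).
     plane_graph_tri D \<alpha> \<sigma> f0 \<and> w \<ge> 1 \<longrightarrow>
     (\<exists>\<delta><w. (\<Sum>K \<in> {K \<in> comp_tree_nodes D \<alpha> \<sigma> f0. node_depth D \<alpha> \<sigma> f0 K mod w = \<delta>}.
              real (node_cost D \<alpha> \<sigma> K))
            \<le> c * real (card (cm_verts D \<sigma>)) / real w)"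
proof (rule exI[of _ 24], intro allI impI, elim conjE)
  fix D \<alpha> \<sigma> f0 and w :: nat
  assume pg: "plane_graph_tri D \<alpha> \<sigma> f0" and "1 \<le> w"
  let ?N = "comp_tree_nodes D \<alpha> \<sigma> f0"
  have cm: "comb_map D \<alpha> \<sigma>"
    using pg unfolding plane_graph_tri_def by blast
  have "(\<Sum>K \<in> ?N. node_cost D \<alpha> \<sigma> K) \<le> 24 * card (cm_verts D \<sigma>)"
    using comb_map_sum_node_cost_le[OF cm, of f0] plane_graph_tri_card_edges_le[OF pg] by linarith
  then have "(\<Sum>K \<in> ?N. real (node_cost D \<alpha> \<sigma> K)) \<le> 24 * real (card (cm_verts D \<sigma>))"
    by (metis of_nat_le_iff of_nat_mult of_nat_numeral of_nat_sum)
  then have total: "(\<Sum>K \<in> ?N. real (node_cost D \<alpha> \<sigma> K)) / real w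
      \<le> 24 * real (card (cm_verts D \<sigma>)) / real w"
    by (rule divide_right_mono) simp
  have "0 < w" using \<open>1 \<le> w\<close> by simp
  then obtain \<delta> where "\<delta> < w" and class_bound:
    "(\<Sum>K \<in> {K \<in> ?N. node_depth D \<alpha> \<sigma> f0 K mod w = \<delta>}. real (node_cost D \<alpha> \<sigma> K))
       \<le> (\<Sum>K \<in> ?N. real (node_cost D \<alpha> \<sigma> K)) / real w"
    using ex_residue_class_sum_le_average[OF finite_comp_tree_nodes[OF cm],
        where g = "node_depth D \<alpha> \<sigma> f0" and h = "\<lambda>K. real (node_cost D \<alpha> \<sigma> K)"]
    by blast
  then show "\<exists>\<delta><w. (\<Sum>K \<in> {K \<in> ?N. node_depth D \<alpha> \<sigma> f0 K mod w = \<delta>}.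
              real (node_cost D \<alpha> \<sigma> K)) \<le> 24 * real (card (cm_verts D \<sigma>)) / real w"
    using order_trans[OF class_bound total] by blast
qed

end
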